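(* Let $\mu,\tau$ be distributions over $\{0,1\}^n$, let $T$ be a transfer distribution between $\mu$ and $\tau$ achieving $d_{EM}(\mu,\tau)=\mathbb{E}_{(x,y)\sim T}[d_H(x,y)]$, and let $\Xi$ be a distribution over $\{0,1\}^n\times\{0,1\}^n\times A$ ($A$ finite) with $\Xi|_{1,2}=T$. Let $\eta=\Xi|_3$, let $\Lambda^*$ be the type distribution of the detailing $\Xi|_{1,3}$ of $\mu$, and $\Upsilon^*$ the type distribution of the detailing $\Xi|_{2,3}$ of $\tau$. Then $d^\eta_{EM}(\Lambda^*,\Upsilon^* )\le d_{EM}(\mu,\tau)$.
   Context: $d_H$ is normalized Hamming distance and $d_{EM}(\mu,\tau)=\min_T\mathbb{E}_T[d_H]$ over transfer distributions (couplings with marginals $\mu,\tau$). For a detailing $\zeta$ (a distribution on $\{0,1\}^n\times A$), the type of $i\in[n]$ is $t_i(a)=\Pr_{x\sim\zeta|_1^{2:a}}[x_i=1]$ when $\zeta|_2(a)>0$ and $0$ otherwise, and the type distribution is the law of $t_{\mathbf i}$ for uniform $\mathbf i\in[n]$. $d^\eta_{\ell_1}(x,y)=\sum_a\eta(a)|x_a-y_a|$ and $d^\eta_{EM}$ is the Earth Mover distance over it. *)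

theory Defs
  imports "HOL-Probability.Probability"
begin

text \<open>Points of the cube {0,1}^n are boolean lists of length n (True = 1).\<close>

definition hamming :: "nat \<Rightarrow> bool list \<Rightarrow> bool list \<Rightarrow> real" where
  "hamming n x y = real (card {i. i < n \<and> x ! i \<noteq> y ! i}) / real n"

definition is_transfer :: "('b \<times> 'c) pmf \<Rightarrow> 'b pmf \<Rightarrow> 'c pmf \<Rightarrow> bool" where
  "is_transfer T \<mu> \<tau> \<longleftrightarrow> map_pmf fst T = \<mu> \<and> map_pmf snd T = \<tau>"

definition earth_mover :: "('b \<Rightarrow> 'b \<Rightarrow> real) \<Rightarrow> 'b pmf \<Rightarrow> 'b pmf \<Rightarrow> real" where
  "earth_mover d \<mu> \<tau> =
     Inf {measure_pmf.expectation T (\<lambda>(x, y). d x y) | T. is_transfer T \<mu> \<tau>}"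

definition d_EM :: "nat \<Rightarrow> bool list pmf \<Rightarrow> bool list pmf \<Rightarrow> real" where
  "d_EM n \<mu> \<tau> = earth_mover (hamming n) \<mu> \<tau>"

definition d_l1 :: "'a::finite pmf \<Rightarrow> ('a \<Rightarrow> real) \<Rightarrow> ('a \<Rightarrow> real) \<Rightarrow> real" where
  "d_l1 \<eta> x y = (\<Sum>a\<in>UNIV. pmf \<eta> a * \<bar>x a - y a\<bar>)"

definition d_EM_eta :: "'a::finite pmf \<Rightarrow> ('a \<Rightarrow> real) pmf \<Rightarrow> ('a \<Rightarrow> real) pmf \<Rightarrow> real" where
  "d_EM_eta \<eta> \<Lambda> \<Upsilon> = earth_mover (d_l1 \<eta>) \<Lambda> \<Upsilon>"

definition type_of :: "(bool list \<times> 'a) pmf \<Rightarrow> nat \<Rightarrow> 'a \<Rightarrow> real" where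
  "type_of \<zeta> i a =
     (if pmf (map_pmf snd \<zeta>) a > 0
      then measure_pmf.prob \<zeta> {(x, a'). a' = a \<and> x ! i}
           / pmf (map_pmf snd \<zeta>) a
      else 0)"

definition type_distribution :: "nat \<Rightarrow> (bool list \<times> 'a) pmf \<Rightarrow> ('a \<Rightarrow> real) pmf" where
  "type_distribution n \<zeta> = map_pmf (\<lambda>i. type_of \<zeta> i) (pmf_of_set {..<n})"

end

theory Submission
  imports Defs
begin

text \<open>Couple the two type distributions through the common coordinate index i. Weighted by
  \<open>\<eta>(a)\<close>, the types of i in the two detailings differ at a by at most the probability that
  the detail is a and x and y disagree at i. Summing over a gives \<open>d\<^sup>\<eta>\<^sub>\<ell>\<^sub>1\<close> \<open>\<le>\<close> Pr[x_i \<noteq> y_i],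
  and averaging over i gives the expected Hamming distance under the optimal transfer T.\<close>

lemma earth_mover_le_transfer:
  assumes "\<And>x y. d x y \<ge> 0" and "is_transfer C \<mu> \<tau>"
  shows "earth_mover d \<mu> \<tau> \<le> measure_pmf.expectation C (\<lambda>(x, y). d x y)"
  unfolding earth_mover_def
proof (rule cInf_lower)
  show "measure_pmf.expectation C (\<lambda>(x, y). d x y)
          \<in> {measure_pmf.expectation T (\<lambda>(x, y). d x y) |T. is_transfer T \<mu> \<tau>}"
    using assms(2) by blast
  show "bdd_below {measure_pmf.expectation T (\<lambda>(x, y). d x y) |T. is_transfer T \<mu> \<tau>}"
    by (rule bdd_belowI[where m = 0])
       (auto intro!: Bochner_Integration.integral_nonneg simp: assms(1) split: prod.splits)
qed

lemma d_l1_nonneg: "d_l1 \<eta> x y \<ge> 0"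
  unfolding d_l1_def by (intro sum_nonneg mult_nonneg_nonneg) auto

lemma d_EM_eta_type_distribution_le:
  assumes "n > 0"
  shows "d_EM_eta \<eta> (type_distribution n \<zeta>) (type_distribution n \<zeta>')
           \<le> (\<Sum>i<n. d_l1 \<eta> (type_of \<zeta> i) (type_of \<zeta>' i)) / real n"
proof -
  define C where "C = map_pmf (\<lambda>i. (type_of \<zeta> i, type_of \<zeta>' i)) (pmf_of_set {..<n})"
  have "is_transfer C (type_distribution n \<zeta>) (type_distribution n \<zeta>')"
    unfolding is_transfer_def C_def type_distribution_def by (simp add: map_pmf_comp)
  then have "d_EM_eta \<eta> (type_distribution n \<zeta>) (type_distribution n \<zeta>')
               \<le> measure_pmf.expectation C (\<lambda>(x, y). d_l1 \<eta> x y)"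
    unfolding d_EM_eta_def by (intro earth_mover_le_transfer d_l1_nonneg)
  also have "\<dots> = (\<Sum>i<n. d_l1 \<eta> (type_of \<zeta> i) (type_of \<zeta>' i)) / real n"
    unfolding C_def integral_map_pmf using assms by (subst integral_pmf_of_set) auto
  finally show ?thesis .
qed

lemma pmf_snd_mult_type_of:
  "pmf (map_pmf snd \<zeta>) a * type_of \<zeta> i a = measure_pmf.prob \<zeta> {(x, a'). a' = a \<and> x ! i}"
proof (cases "pmf (map_pmf snd \<zeta>) a > 0")
  case True
  then show ?thesis by (simp add: type_of_def)
next
  case False
  have "measure_pmf.prob \<zeta> {(x, a'). a' = a \<and> x ! i} \<le> measure_pmf.prob \<zeta> (snd -` {a})"
    by (rule measure_pmf.finite_measure_mono) auto
  also have "\<dots> = pmf (map_pmf snd \<zeta>) a"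
    by (simp add: measure_map_pmf[symmetric] measure_pmf_single)
  also have "\<dots> = 0"
    using False pmf_nonneg[of "map_pmf snd \<zeta>" a] by linarith
  finally show ?thesis
    using False measure_nonneg[of \<zeta> "{(x, a'). a' = a \<and> x ! i}"] by (simp add: type_of_def)
qed

lemma abs_prob_diff_le_prob_sym_diff:
  "\<bar>measure_pmf.prob M A - measure_pmf.prob M B\<bar> \<le> measure_pmf.prob M ((A - B) \<union> (B - A))"
proof -
  have "measure_pmf.prob M X \<le> measure_pmf.prob M Y + measure_pmf.prob M ((A - B) \<union> (B - A))"
    if "X - Y \<subseteq> (A - B) \<union> (B - A)" for X Y
  proof -
    have "measure_pmf.prob M X \<le> measure_pmf.prob M (Y \<union> (X - Y))"
      by (rule measure_pmf.finite_measure_mono) auto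
    also have "\<dots> \<le> measure_pmf.prob M Y + measure_pmf.prob M (X - Y)"
      by (rule measure_Un_le) auto
    also have "measure_pmf.prob M (X - Y) \<le> measure_pmf.prob M ((A - B) \<union> (B - A))"
      using that by (rule measure_pmf.finite_measure_mono) auto
    finally show ?thesis by simp
  qed
  from this[of A B] this[of B A] show ?thesis by auto
qed

lemma d_l1_type_of_marginals_le:
  fixes \<Xi> :: "(bool list \<times> bool list \<times> 'a::finite) pmf"
  shows "d_l1 (map_pmf (\<lambda>(x, y, a). a) \<Xi>)
           (type_of (map_pmf (\<lambda>(x, y, a). (x, a)) \<Xi>) i)
           (type_of (map_pmf (\<lambda>(x, y, a). (y, a)) \<Xi>) i)
         \<le> measure_pmf.prob (map_pmf (\<lambda>(x, y, a). (x, y)) \<Xi>) {(x, y). x ! i \<noteq> y ! i}"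
proof -
  define \<eta> where "\<eta> = map_pmf (\<lambda>(x, y, a). a) \<Xi>"
  define \<zeta> where "\<zeta> = map_pmf (\<lambda>(x, y, a). (x, a)) \<Xi>"
  define \<zeta>' where "\<zeta>' = map_pmf (\<lambda>(x, y, a). (y, a)) \<Xi>"
  define D where "D a = {(x :: bool list, y :: bool list, a'). a' = a \<and> x ! i \<noteq> y ! i}" for a :: 'a
  have snd_marginals: "map_pmf snd \<zeta> = \<eta>" "map_pmf snd \<zeta>' = \<eta>"
    unfolding \<zeta>_def \<zeta>'_def \<eta>_def map_pmf_comp by (auto intro!: map_pmf_cong)
  have "pmf \<eta> a * \<bar>type_of \<zeta> i a - type_of \<zeta>' i a\<bar>
      = \<bar>measure_pmf.prob \<zeta> {(x, a'). a' = a \<and> x ! i} - measure_pmf.prob \<zeta>' {(y, a'). a' = a \<and> y ! i}\<bar>"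
    for a
  proof -
    have "pmf \<eta> a * \<bar>type_of \<zeta> i a - type_of \<zeta>' i a\<bar>
        = \<bar>pmf \<eta> a * type_of \<zeta> i a - pmf \<eta> a * type_of \<zeta>' i a\<bar>"
      by (simp add: abs_mult flip: right_diff_distrib)
    then show ?thesis
      using pmf_snd_mult_type_of[of \<zeta> a i] pmf_snd_mult_type_of[of \<zeta>' a i] snd_marginals
      by simp
  qed
  also have "\<dots> a = \<bar>measure_pmf.prob \<Xi> {(x, y, a'). a' = a \<and> x ! i}
                    - measure_pmf.prob \<Xi> {(x, y, a'). a' = a \<and> y ! i}\<bar>" for a
    unfolding \<zeta>_def \<zeta>'_def measure_map_pmf
    by (intro arg_cong2[where f = "\<lambda>s t. \<bar>measure_pmf.prob \<Xi> s - measure_pmf.prob \<Xi> t\<bar>"]) auto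
  also have "\<dots> a \<le> measure_pmf.prob \<Xi> (D a)" for a
  proof -
    have "({(x, y, a'). a' = a \<and> x ! i} - {(x, y, a'). a' = a \<and> y ! i})
          \<union> ({(x, y, a'). a' = a \<and> y ! i} - {(x, y, a'). a' = a \<and> x ! i}) = D a"
      by (auto simp: D_def)
    then show ?thesis
      using abs_prob_diff_le_prob_sym_diff[of \<Xi>] by metis
  qed
  finally have "d_l1 \<eta> (type_of \<zeta> i) (type_of \<zeta>' i) \<le> (\<Sum>a\<in>UNIV. measure_pmf.prob \<Xi> (D a))"
    unfolding d_l1_def by (intro sum_mono)
  also have "\<dots> = measure_pmf.prob \<Xi> (\<Union>a. D a)"
    by (rule measure_pmf.finite_measure_finite_Union[symmetric])
       (auto simp: disjoint_family_on_def D_def)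
  also have "(\<Union>a. D a) = (\<lambda>(x, y, a). (x, y)) -` {(x, y). x ! i \<noteq> y ! i}"
    by (auto simp: D_def)
  finally show ?thesis
    unfolding \<eta>_def \<zeta>_def \<zeta>'_def measure_map_pmf .
qed

lemma expectation_hamming:
  "measure_pmf.expectation T (\<lambda>(x, y). hamming n x y)
     = (\<Sum>i<n. measure_pmf.prob T {(x, y). x ! i \<noteq> y ! i}) / real n"
proof -
  have "hamming n x y = (\<Sum>i<n. indicator {(x, y). x ! i \<noteq> y ! i} (x, y)) / real n" for x y
  proof -
    have "{i. i < n \<and> x ! i \<noteq> y ! i} = {i\<in>{..<n}. x ! i \<noteq> y ! i}" by auto
    then have "real (card {i. i < n \<and> x ! i \<noteq> y ! i}) = (\<Sum>i\<in>{i\<in>{..<n}. x ! i \<noteq> y ! i}. 1)"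
      by simp
    also have "\<dots> = (\<Sum>i<n. if x ! i \<noteq> y ! i then 1 else 0)"
      by (subst sum.inter_filter) auto
    also have "\<dots> = (\<Sum>i<n. indicator {(x, y). x ! i \<noteq> y ! i} (x, y))"
      by (intro sum.cong) (auto simp: indicator_def)
    finally show ?thesis unfolding hamming_def by simp
  qed
  then have "measure_pmf.expectation T (\<lambda>(x, y). hamming n x y)
      = measure_pmf.expectation T (\<lambda>z. \<Sum>i<n. indicator {(x, y). x ! i \<noteq> y ! i} z) / real n"
    by (simp add: case_prod_beta')
  also have "\<dots> = (\<Sum>i<n. measure_pmf.prob T {(x, y). x ! i \<noteq> y ! i}) / real n"
    by (subst Bochner_Integration.integral_sum) (auto simp: measure_pmf.emeasure_eq_measure)
  finally show ?thesis .
qed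

theorem lemma5p5:
  fixes n :: nat
    and \<mu> \<tau> :: "bool list pmf"
    and T :: "(bool list \<times> bool list) pmf"
    and \<Xi> :: "(bool list \<times> bool list \<times> 'a::finite) pmf"
  assumes "n > 0"
    and "set_pmf \<mu> \<subseteq> {x. length x = n}"
    and "set_pmf \<tau> \<subseteq> {x. length x = n}"
    and "is_transfer T \<mu> \<tau>"
    and "d_EM n \<mu> \<tau> = measure_pmf.expectation T (\<lambda>(x, y). hamming n x y)"
    and "map_pmf (\<lambda>(x, y, a). (x, y)) \<Xi> = T"
  shows "d_EM_eta (map_pmf (\<lambda>(x, y, a). a) \<Xi>)
           (type_distribution n (map_pmf (\<lambda>(x, y, a). (x, a)) \<Xi>))
           (type_distribution n (map_pmf (\<lambda>(x, y, a). (y, a)) \<Xi>))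
         \<le> d_EM n \<mu> \<tau>"
proof -
  have "d_EM_eta (map_pmf (\<lambda>(x, y, a). a) \<Xi>)
           (type_distribution n (map_pmf (\<lambda>(x, y, a). (x, a)) \<Xi>))
           (type_distribution n (map_pmf (\<lambda>(x, y, a). (y, a)) \<Xi>))
        \<le> (\<Sum>i<n. d_l1 (map_pmf (\<lambda>(x, y, a). a) \<Xi>)
                     (type_of (map_pmf (\<lambda>(x, y, a). (x, a)) \<Xi>) i)
                     (type_of (map_pmf (\<lambda>(x, y, a). (y, a)) \<Xi>) i)) / real n"
    using assms(1) by (rule d_EM_eta_type_distribution_le)
  also have "\<dots> \<le> (\<Sum>i<n. measure_pmf.prob T {(x, y). x ! i \<noteq> y ! i}) / real n"
    using d_l1_type_of_marginals_le[of \<Xi>] unfolding assms(6)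
    by (intro divide_right_mono sum_mono) auto
  also have "\<dots> = d_EM n \<mu> \<tau>"
    using assms(5) by (simp add: expectation_hamming)
  finally show ?thesis .
qed

end
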